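(* Let $f\colon X\to Y$ be a morphism in $G\mathbf{BornCoarse}$. Assume that $f$ is a weak coarse equivalence and that there exists an entourage $U$ of $Y$ such that for every $y\in Y$ there is $x\in X$ with $f(x)\in U[\{y\}]$, $G_x\subseteq G_y$ and $|G_y/G_x|<\infty$, where $G_x,G_y$ denote stabilizers. Then $\mathrm{LF}(f)$ is almost surjective.
   Context: $G\mathbf{BornCoarse}$: $G$-sets with $G$-coarse structure (entourages; invariant ones cofinal) and compatible $G$-bornology; morphisms equivariant, controlled, proper. $f$ is a weak coarse equivalence if, after forgetting the $G$-action, there is a controlled proper $g\colon Y\to X$ with $f g$, $g f$ close to the identities (two maps $f_0,f_1$ are close if $(f_0\times f_1)(\mathrm{diag})$ is an entourage). $\mathrm{LF}(X)$ is the set of $G$-invariant subsets $L$ with $|L\cap B|<\infty$ for every bounded $B$. A multivalued map $s\colon L\to H$ is a subset $s\subseteq L\times H$ projecting surjectively onto $L$; it is surjective if it projects surjectively onto $H$; setting $L_h=\{\ell:(\ell,h)\in s\}$, $\tilde L=\bigsqcup_{h\in H}L_h$ with natural maps $q\colon\tilde L\to L$ and $\tilde s\colon \tilde L\to H$, $s$ is proper if $q$ and $\tilde s$ have finite fibres, and equivariant if $s$ is $G$-invariant. $L\in\mathrm{LF}(X)$ is an $f$-shadow of $H\in\mathrm{LF}(Y)$ if there is a proper surjective equivariant multivalued map $s\colon L\to H$ with $(f\times\mathrm{id}_Y)(s)$ an entourage of $Y$. $\mathrm{LF}(f)$ is almost surjective if every $H\in\mathrm{LF}(Y)$ admits an $f$-shadow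 in $\mathrm{LF}(X)$. *)

theory Defs
  imports "HOL-Algebra.Group_Action" "HOL-Algebra.Coset"
begin

definition coarse_structure :: "'x set \<Rightarrow> ('x \<times> 'x) set set \<Rightarrow> bool" where
  "coarse_structure X C \<longleftrightarrow>
     (\<forall>U\<in>C. U \<subseteq> X \<times> X) \<and> Id_on X \<in> C \<and>
     (\<forall>U\<in>C. \<forall>V. V \<subseteq> U \<longrightarrow> V \<in> C) \<and>
     (\<forall>U\<in>C. \<forall>V\<in>C. U \<union> V \<in> C) \<and>
     (\<forall>U\<in>C. U\<inverse> \<in> C) \<and>
     (\<forall>U\<in>C. \<forall>V\<in>C. U O V \<in> C)"

definition bornology :: "'x set \<Rightarrow> 'x set set \<Rightarrow> bool" where
  "bornology X B \<longleftrightarrow>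
     (\<forall>A\<in>B. A \<subseteq> X) \<and> \<Union>B = X \<and>
     (\<forall>A\<in>B. \<forall>A'. A' \<subseteq> A \<longrightarrow> A' \<in> B) \<and>
     (\<forall>A\<in>B. \<forall>A'\<in>B. A \<union> A' \<in> B)"

definition ent_image :: "('x \<times> 'x) set \<Rightarrow> 'x set \<Rightarrow> 'x set" where
  "ent_image U A = {x. \<exists>a\<in>A. (x, a) \<in> U}"

definition compatible :: "('x \<times> 'x) set set \<Rightarrow> 'x set set \<Rightarrow> bool" where
  "compatible C B \<longleftrightarrow> (\<forall>U\<in>C. \<forall>A\<in>B. ent_image U A \<in> B)"

definition inv_rel :: "('g, 'm) monoid_scheme \<Rightarrow> ('g \<Rightarrow> 'x \<Rightarrow> 'x) \<Rightarrow> ('x \<times> 'x) set \<Rightarrow> bool" where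
  "inv_rel G \<phi> U \<longleftrightarrow> (\<forall>g\<in>carrier G. \<forall>(x, y)\<in>U. (\<phi> g x, \<phi> g y) \<in> U)"

definition inv_set :: "('g, 'm) monoid_scheme \<Rightarrow> ('g \<Rightarrow> 'x \<Rightarrow> 'x) \<Rightarrow> 'x set \<Rightarrow> bool" where
  "inv_set G \<phi> A \<longleftrightarrow> (\<forall>g\<in>carrier G. \<forall>x\<in>A. \<phi> g x \<in> A)"

definition GBornCoarse ::
  "('g, 'm) monoid_scheme \<Rightarrow> 'x set \<Rightarrow> ('g \<Rightarrow> 'x \<Rightarrow> 'x) \<Rightarrow> ('x \<times> 'x) set set \<Rightarrow> 'x set set \<Rightarrow> bool" where
  "GBornCoarse G X \<phi> C B \<longleftrightarrow>
     group G \<and> group_action G X \<phi> \<and>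
     coarse_structure X C \<and> (\<forall>U\<in>C. \<exists>V\<in>C. U \<subseteq> V \<and> inv_rel G \<phi> V) \<and>
     bornology X B \<and> (\<forall>g\<in>carrier G. \<forall>A\<in>B. \<phi> g ` A \<in> B) \<and>
     compatible C B"

definition controlled :: "'x set \<Rightarrow> ('x \<times> 'x) set set \<Rightarrow> ('y \<times> 'y) set set \<Rightarrow> ('x \<Rightarrow> 'y) \<Rightarrow> bool" where
  "controlled X CX CY f \<longleftrightarrow> (\<forall>U\<in>CX. (\<lambda>(a, b). (f a, f b)) ` U \<in> CY)"

definition proper_map :: "'x set \<Rightarrow> 'x set set \<Rightarrow> 'y set set \<Rightarrow> ('x \<Rightarrow> 'y) \<Rightarrow> bool" where
  "proper_map X BX BY f \<longleftrightarrow> (\<forall>A\<in>BY. f -` A \<inter> X \<in> BX)"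

definition equivariant ::
  "('g, 'm) monoid_scheme \<Rightarrow> 'x set \<Rightarrow> ('g \<Rightarrow> 'x \<Rightarrow> 'x) \<Rightarrow> ('g \<Rightarrow> 'y \<Rightarrow> 'y) \<Rightarrow> ('x \<Rightarrow> 'y) \<Rightarrow> bool" where
  "equivariant G X \<phi> \<psi> f \<longleftrightarrow> (\<forall>g\<in>carrier G. \<forall>x\<in>X. f (\<phi> g x) = \<psi> g (f x))"

definition GBC_morphism where
  "GBC_morphism G X \<phi> CX BX Y \<psi> CY BY f \<longleftrightarrow>
     f \<in> X \<rightarrow> Y \<and> equivariant G X \<phi> \<psi> f \<and> controlled X CX CY f \<and> proper_map X BX BY f"

definition close :: "'x set \<Rightarrow> ('y \<times> 'y) set set \<Rightarrow> ('x \<Rightarrow> 'y) \<Rightarrow> ('x \<Rightarrow> 'y) \<Rightarrow> bool" where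
  "close X CY f0 f1 \<longleftrightarrow> (\<lambda>x. (f0 x, f1 x)) ` X \<in> CY"

text \<open>Weak coarse equivalence: forgetting the G-action, f has a controlled proper
  inverse up to closeness.\<close>
definition weak_coarse_equivalence where
  "weak_coarse_equivalence X CX BX Y CY BY f \<longleftrightarrow>
     (\<exists>g. g \<in> Y \<rightarrow> X \<and> controlled Y CY CX g \<and> proper_map Y BY BX g \<and>
          close Y CY (f \<circ> g) id \<and> close X CX (g \<circ> f) id)"

definition stab :: "('g, 'm) monoid_scheme \<Rightarrow> ('g \<Rightarrow> 'x \<Rightarrow> 'x) \<Rightarrow> 'x \<Rightarrow> 'g set" where
  "stab G \<phi> x = {g \<in> carrier G. \<phi> g x = x}"

definition LF :: "('g, 'm) monoid_scheme \<Rightarrow> 'x set \<Rightarrow> ('g \<Rightarrow> 'x \<Rightarrow> 'x) \<Rightarrow> 'x set set \<Rightarrow> 'x set set" where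
  "LF G X \<phi> B = {L. L \<subseteq> X \<and> inv_set G \<phi> L \<and> (\<forall>A\<in>B. finite (L \<inter> A))}"

text \<open>Multivalued maps s : L -> H as relations s \<subseteq> L \<times> H.\<close>
definition multivalued_map :: "'x set \<Rightarrow> 'y set \<Rightarrow> ('x \<times> 'y) set \<Rightarrow> bool" where
  "multivalued_map L H s \<longleftrightarrow> s \<subseteq> L \<times> H \<and> fst ` s = L"

definition mv_surjective :: "'y set \<Rightarrow> ('x \<times> 'y) set \<Rightarrow> bool" where
  "mv_surjective H s \<longleftrightarrow> snd ` s = H"

text \<open>Proper: q : L~ -> L and s~ : L~ -> H have finite fibres, where L~ is the disjoint
  union of the L_h, i.e. (in bijection with) s itself.\<close>
definition mv_proper :: "('x \<times> 'y) set \<Rightarrow> bool" where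
  "mv_proper s \<longleftrightarrow> (\<forall>l. finite {h. (l, h) \<in> s}) \<and> (\<forall>h. finite {l. (l, h) \<in> s})"

definition mv_equivariant ::
  "('g, 'm) monoid_scheme \<Rightarrow> ('g \<Rightarrow> 'x \<Rightarrow> 'x) \<Rightarrow> ('g \<Rightarrow> 'y \<Rightarrow> 'y) \<Rightarrow> ('x \<times> 'y) set \<Rightarrow> bool" where
  "mv_equivariant G \<phi> \<psi> s \<longleftrightarrow> (\<forall>g\<in>carrier G. \<forall>(l, h)\<in>s. (\<phi> g l, \<psi> g h) \<in> s)"

definition shadow where
  "shadow G \<phi> \<psi> CY f L H \<longleftrightarrow>
     (\<exists>s. multivalued_map L H s \<and> mv_surjective H s \<and> mv_proper s \<and>
          mv_equivariant G \<phi> \<psi> s \<and> (\<lambda>(l, h). (f l, h)) ` s \<in> CY)"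

definition LF_almost_surjective where
  "LF_almost_surjective G X \<phi> BX Y \<psi> CY BY f \<longleftrightarrow>
     (\<forall>H\<in>LF G Y \<psi> BY. \<exists>L\<in>LF G X \<phi> BX. shadow G \<phi> \<psi> CY f L H)"

end

theory Submission
  imports Defs
begin

text \<open>Choose one point r in each G-orbit of H and a point x(r) of X with f(x(r)) U-close
  to r whose stabilizer has finite index in G(r). The shadow is the orbit of the pairs (x(r), r)
  under the diagonal action: it is equivariant, surjective onto H and controlled by an invariant
  entourage containing U. Its fibre over g r consists of the points g k x(r) with k in G(r),
  which depend only on the coset of k modulo the stabilizer of x(r) and are therefore finitely
  many. Since f maps bounded sets to bounded sets (through its coarse inverse) and H is locally
  finite, controlledness makes the fibres over points of X and the traces of the domain on
  bounded sets finite.\<close>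

sublocale group_action \<subseteq> group G
  using group_hom group_hom.axioms(1) by blast

lemma (in group_action) inv_set_carrier: "inv_set G \<phi> E"
  unfolding inv_set_def using element_image by blast

lemma (in group_action) orbit_subset_inv_set:
  assumes "inv_set G \<phi> A" "x \<in> A"
  shows "orbit G \<phi> x \<subseteq> A"
  using assms by (auto simp: orbit_def inv_set_def)

lemma (in group_action) orbit_eq:
  assumes "x \<in> E" "y \<in> orbit G \<phi> x"
  shows "orbit G \<phi> y = orbit G \<phi> x"
proof -
  have orbit_E: "orbit G \<phi> z \<subseteq> E" if "z \<in> E" for z
    using orbit_subset_inv_set[OF inv_set_carrier that] .
  have "y \<in> E" using assms orbit_E by blast
  moreover have "x \<in> orbit G \<phi> y" using orbit_sym[OF assms(1) \<open>y \<in> E\<close> assms(2)] .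
  ultimately show ?thesis
    using assms orbit_trans orbit_E by blast
qed

lemma (in group_action) orbit_transversal:
  assumes "A \<subseteq> E" "inv_set G \<phi> A"
  obtains R where "R \<subseteq> A" "A \<subseteq> (\<Union>r\<in>R. orbit G \<phi> r)"
    "\<And>r r'. r \<in> R \<Longrightarrow> r' \<in> R \<Longrightarrow> r' \<in> orbit G \<phi> r \<Longrightarrow> r' = r"
proof -
  \<comment> \<open>rep depends only on the orbit, so rep ` A meets every orbit in A exactly once.\<close>
  define rep where "rep a = (SOME b. b \<in> orbit G \<phi> a)" for a
  have rep_orbit: "rep a \<in> orbit G \<phi> a" if "a \<in> E" for a
    unfolding rep_def using orbit_refl[OF that] by (rule someI)
  show thesis
  proof (rule that[of "rep ` A"])
    show "rep ` A \<subseteq> A"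
      using rep_orbit orbit_subset_inv_set[OF assms(2)] assms(1) by blast
    show "A \<subseteq> (\<Union>r\<in>rep ` A. orbit G \<phi> r)"
    proof
      fix a assume "a \<in> A"
      then have "a \<in> E" "rep a \<in> orbit G \<phi> a" using assms(1) rep_orbit by auto
      moreover have "rep a \<in> E"
        using calculation orbit_subset_inv_set[OF inv_set_carrier] by blast
      ultimately have "a \<in> orbit G \<phi> (rep a)" using orbit_sym by blast
      then show "a \<in> (\<Union>r\<in>rep ` A. orbit G \<phi> r)" using \<open>a \<in> A\<close> by blast
    qed
  next
    fix r r' assume "r \<in> rep ` A" "r' \<in> rep ` A" and r'_r: "r' \<in> orbit G \<phi> r"
    then obtain a a' where a: "a \<in> A" "r = rep a" and a': "a' \<in> A" "r' = rep a'" by blast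
    have "orbit G \<phi> a' = orbit G \<phi> r'"
      using orbit_eq rep_orbit a' assms(1) by (metis subsetD)
    also have "\<dots> = orbit G \<phi> r"
      using orbit_eq r'_r rep_orbit a assms(1) orbit_subset_inv_set[OF inv_set_carrier]
      by (metis subsetD)
    also have "\<dots> = orbit G \<phi> a"
      using orbit_eq rep_orbit a assms(1) by (metis subsetD)
    finally show "r' = r"
      unfolding a a' rep_def by simp
  qed
qed

lemma (in group_action) finite_image_if_finitely_many_cosets:
  assumes "x \<in> E" "K \<subseteq> carrier G" "finite {k <# stab G \<phi> x | k. k \<in> K}"
  shows "finite ((\<lambda>k. \<phi> k x) ` K)"
proof -
  define pick where "pick C = \<phi> (SOME g. g \<in> C) x" for C
  have "\<phi> k x = pick (k <# stab G \<phi> x)" if "k \<in> K" for k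
  proof -
    have kG: "k \<in> carrier G" using that assms(2) by blast
    have "\<one> \<in> stab G \<phi> x"
      using stabilizer_one_closed[OF assms(1)] by (simp add: stab_def stabilizer_def)
    then have "k \<in> k <# stab G \<phi> x"
      using kG unfolding l_coset_def by force
    then have "(SOME g. g \<in> k <# stab G \<phi> x) \<in> k <# stab G \<phi> x" by (rule someI)
    then obtain t where t: "t \<in> stab G \<phi> x" "(SOME g. g \<in> k <# stab G \<phi> x) = k \<otimes> t"
      unfolding l_coset_def by blast
    then have "t \<in> carrier G" "\<phi> t x = x" by (auto simp: stab_def)
    then show ?thesis
      unfolding pick_def t(2) using composition_rule[OF assms(1) kG] by simp
  qed
  then have "(\<lambda>k. \<phi> k x) ` K \<subseteq> pick ` {k <# stab G \<phi> x | k. k \<in> K}" by blast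
  then show ?thesis using assms(3) finite_surj by blast
qed

definition diagonal_saturation ::
  "('g, 'm) monoid_scheme \<Rightarrow> ('g \<Rightarrow> 'x \<Rightarrow> 'x) \<Rightarrow> ('g \<Rightarrow> 'y \<Rightarrow> 'y) \<Rightarrow> ('x \<times> 'y) set \<Rightarrow> ('x \<times> 'y) set" where
  "diagonal_saturation G \<phi> \<psi> P = {(\<phi> g l, \<psi> g h) | g l h. g \<in> carrier G \<and> (l, h) \<in> P}"

lemma diagonal_saturation_subset:
  assumes "P \<subseteq> A \<times> B" "inv_set G \<phi> A" "inv_set G \<psi> B"
  shows "diagonal_saturation G \<phi> \<psi> P \<subseteq> A \<times> B"
  using assms unfolding diagonal_saturation_def inv_set_def by blast

lemma snd_diagonal_saturation:
  "snd ` diagonal_saturation G \<phi> \<psi> P = (\<Union>h\<in>snd ` P. orbit G \<psi> h)"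
  unfolding diagonal_saturation_def orbit_def by force

lemma mv_equivariant_diagonal_saturation:
  assumes "group_action G X \<phi>" "group_action G Y \<psi>" "P \<subseteq> X \<times> Y"
  shows "mv_equivariant G \<phi> \<psi> (diagonal_saturation G \<phi> \<psi> P)"
  unfolding mv_equivariant_def
proof (intro ballI, clarify)
  interpret X: group_action G X \<phi> by (rule assms(1))
  interpret Y: group_action G Y \<psi> by (rule assms(2))
  fix g' l h assume g': "g' \<in> carrier G" and "(l, h) \<in> diagonal_saturation G \<phi> \<psi> P"
  then obtain g l0 h0 where g: "g \<in> carrier G" "(l0, h0) \<in> P" "l = \<phi> g l0" "h = \<psi> g h0"
    unfolding diagonal_saturation_def by blast
  then have "\<phi> g' l = \<phi> (g' \<otimes>\<^bsub>G\<^esub> g) l0" "\<psi> g' h = \<psi> (g' \<otimes>\<^bsub>G\<^esub> g) h0"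
    using X.composition_rule Y.composition_rule g' assms(3) by auto
  then show "(\<phi> g' l, \<psi> g' h) \<in> diagonal_saturation G \<phi> \<psi> P"
    unfolding diagonal_saturation_def using g g' by blast
qed

lemma diagonal_saturation_controlled:
  assumes "equivariant G X \<phi> \<psi> f" "inv_rel G \<psi> V" "fst ` P \<subseteq> X"
    and "\<And>l h. (l, h) \<in> P \<Longrightarrow> (f l, h) \<in> V"
  shows "(\<lambda>(l, h). (f l, h)) ` diagonal_saturation G \<phi> \<psi> P \<subseteq> V"
proof clarify
  fix l h assume "(l, h) \<in> diagonal_saturation G \<phi> \<psi> P"
  then obtain g l0 h0 where g: "g \<in> carrier G" "(l0, h0) \<in> P" "l = \<phi> g l0" "h = \<psi> g h0"
    unfolding diagonal_saturation_def by blast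
  then have "f l = \<psi> g (f l0)"
    using assms(1,3) unfolding equivariant_def by force
  then show "(f l, h) \<in> V"
    using assms(2,4) g unfolding inv_rel_def by fastforce
qed

lemma finite_fibre_diagonal_saturation_transversal:
  assumes "group_action G X \<phi>" "group_action G Y \<psi>" "R \<subseteq> Y" "c \<in> R \<rightarrow> X"
    and transversal: "\<And>r r'. r \<in> R \<Longrightarrow> r' \<in> R \<Longrightarrow> r' \<in> orbit G \<psi> r \<Longrightarrow> r' = r"
    and finite_index: "\<And>r. r \<in> R \<Longrightarrow> finite {k <#\<^bsub>G\<^esub> stab G \<phi> (c r) | k. k \<in> stab G \<psi> r}"
  shows "finite {l. (l, h) \<in> diagonal_saturation G \<phi> \<psi> ((\<lambda>r. (c r, r)) ` R)}"
    (is "finite (?fibre h)")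
proof (cases "?fibre h = {}")
  case False
  interpret X: group_action G X \<phi> by (rule assms(1))
  interpret Y: group_action G Y \<psi> by (rule assms(2))
  from False obtain g0 r where g0: "g0 \<in> carrier G" and r: "r \<in> R" and h: "h = \<psi> g0 r"
    unfolding diagonal_saturation_def by blast
  have rY: "r \<in> Y" and crX: "c r \<in> X" using r assms(3,4) by auto
  have "?fibre h \<subseteq> \<phi> g0 ` (\<lambda>k. \<phi> k (c r)) ` stab G \<psi> r"
  proof
    fix l assume "l \<in> ?fibre h"
    then obtain g r' where g: "g \<in> carrier G" and r': "r' \<in> R"
      and l: "l = \<phi> g (c r')" and h': "h = \<psi> g r'"
      unfolding diagonal_saturation_def by blast
    define k where "k = inv\<^bsub>G\<^esub> g0 \<otimes>\<^bsub>G\<^esub> g"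
    have kG: "k \<in> carrier G" using g g0 k_def by simp
    have "\<psi> k r' = \<psi> (inv\<^bsub>G\<^esub> g0) h"
      using Y.composition_rule r' assms(3) g g0 h' k_def by auto
    also have "\<dots> = r" using Y.orbit_sym_aux[OF g0 rY h[symmetric]] .
    finally have k_r': "\<psi> k r' = r" .
    then have "r = r'"
      using transversal[OF r' r] kG unfolding orbit_def by blast
    then have "k \<in> stab G \<psi> r" using kG k_r' by (simp add: stab_def)
    moreover have "l = \<phi> g0 (\<phi> k (c r))"
      using X.composition_rule[OF crX g0 kG] g g0 l \<open>r = r'\<close>
      by (simp add: k_def X.m_assoc[symmetric])
    ultimately show "l \<in> \<phi> g0 ` (\<lambda>k. \<phi> k (c r)) ` stab G \<psi> r" by blast
  qed
  moreover have "finite ((\<lambda>k. \<phi> k (c r)) ` stab G \<psi> r)"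
    using X.finite_image_if_finitely_many_cosets[OF crX _ finite_index[OF r]]
    by (auto simp: stab_def)
  ultimately show ?thesis by (meson finite_imageI finite_subset)
qed simp

lemma bornology_singleton:
  assumes "bornology X B" "x \<in> X"
  shows "{x} \<in> B"
  using assms unfolding bornology_def by blast

lemma bounded_image_if_weak_coarse_equivalence:
  assumes "bornology X BX" "compatible CX BX" "bornology Y BY" "f \<in> X \<rightarrow> Y"
    and "weak_coarse_equivalence X CX BX Y CY BY f" "A \<in> BX"
  shows "f ` A \<in> BY"
proof -
  obtain k where k_proper: "proper_map Y BY BX k" and k_close: "close X CX (k \<circ> f) id"
    using assms(5) unfolding weak_coarse_equivalence_def by blast
  have "A \<subseteq> X" using assms(1,6) unfolding bornology_def by blast
  define W where "W = (\<lambda>x. (k (f x), x)) ` X"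
  have "W \<in> CX" using k_close unfolding close_def W_def by simp
  then have "ent_image W A \<in> BX" using assms(2,6) unfolding compatible_def by blast
  then have "k -` ent_image W A \<inter> Y \<in> BY" using k_proper unfolding proper_map_def by blast
  moreover have "f ` A \<subseteq> k -` ent_image W A \<inter> Y"
    using \<open>A \<subseteq> X\<close> assms(4) unfolding W_def ent_image_def by blast
  ultimately show ?thesis using assms(3) unfolding bornology_def by blast
qed

lemma finite_Image_if_controlled:
  assumes "coarse_structure Y CY" "compatible CY BY" "\<forall>B\<in>BY. finite (H \<inter> B)"
    and "snd ` s \<subseteq> H" "(\<lambda>(l, h). (f l, h)) ` s \<in> CY" "f ` A \<in> BY"
  shows "finite (s `` A)"
proof -
  let ?E = "(\<lambda>(l, h). (f l, h)) ` s"
  have "?E\<inverse> \<in> CY" using assms(1,5) unfolding coarse_structure_def by blast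
  then have "ent_image (?E\<inverse>) (f ` A) \<in> BY" using assms(2,6) unfolding compatible_def by blast
  moreover have "s `` A \<subseteq> H \<inter> ent_image (?E\<inverse>) (f ` A)"
    using assms(4) unfolding ent_image_def by force
  ultimately show ?thesis using assms(3) finite_subset by blast
qed

lemma LF_domain_shadow:
  assumes "bornology X BX" "coarse_structure Y CY" "compatible CY BY" "\<forall>A\<in>BX. f ` A \<in> BY"
    and "H \<in> LF G Y \<psi> BY" "s \<subseteq> X \<times> H" "snd ` s = H" "mv_equivariant G \<phi> \<psi> s"
    and "(\<lambda>(l, h). (f l, h)) ` s \<in> CY" "\<And>h. finite {l. (l, h) \<in> s}"
  shows "fst ` s \<in> LF G X \<phi> BX \<and> shadow G \<phi> \<psi> CY f (fst ` s) H"
proof -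
  have Image_finite: "finite (s `` A)" if "A \<in> BX" for A
    using finite_Image_if_controlled[OF assms(2,3) _ _ assms(9)] assms(4,5,7) that
    unfolding LF_def by blast
  have "finite (fst ` s \<inter> A)" if "A \<in> BX" for A
  proof (rule finite_subset)
    show "fst ` s \<inter> A \<subseteq> (\<Union>h\<in>s `` A. {l. (l, h) \<in> s})" by force
    show "finite (\<Union>h\<in>s `` A. {l. (l, h) \<in> s})" using Image_finite[OF that] assms(10) by blast
  qed
  moreover have "finite {h. (l, h) \<in> s}" for l
  proof (cases "l \<in> X")
    case True
    then show ?thesis
      using Image_finite[OF bornology_singleton[OF assms(1)]] by (simp add: Image_singleton)
  next
    case False
    then have "{h. (l, h) \<in> s} = {}" using assms(6) by blast
    then show ?thesis by simp
  qed
  ultimately have "mv_proper s" using assms(10) unfolding mv_proper_def by blast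
  moreover have "fst ` s \<subseteq> X" "inv_set G \<phi> (fst ` s)"
    using assms(6,8) unfolding mv_equivariant_def inv_set_def by force+
  moreover have "multivalued_map (fst ` s) H s" "mv_surjective H s"
    using assms(6,7) unfolding multivalued_map_def mv_surjective_def by force+
  ultimately show ?thesis
    using \<open>\<And>A. A \<in> BX \<Longrightarrow> finite (fst ` s \<inter> A)\<close> assms(8,9)
    unfolding LF_def shadow_def by (intro conjI CollectI exI[of _ s]) auto
qed

lemma exists_LF_shadow:
  assumes "group_action G X \<phi>" "group_action G Y \<psi>" "bornology X BX"
    and "coarse_structure Y CY" "compatible CY BY"
    and "equivariant G X \<phi> \<psi> f" "\<forall>A\<in>BX. f ` A \<in> BY"
    and "V \<in> CY" "inv_rel G \<psi> V" "c \<in> Y \<rightarrow> X" "\<And>y. y \<in> Y \<Longrightarrow> (f (c y), y) \<in> V"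
    and "\<And>y. y \<in> Y \<Longrightarrow> finite {k <#\<^bsub>G\<^esub> stab G \<phi> (c y) | k. k \<in> stab G \<psi> y}"
    and H: "H \<in> LF G Y \<psi> BY"
  shows "\<exists>L\<in>LF G X \<phi> BX. shadow G \<phi> \<psi> CY f L H"
proof -
  interpret X: group_action G X \<phi> by (rule assms(1))
  interpret Y: group_action G Y \<psi> by (rule assms(2))
  have HY: "H \<subseteq> Y" and H_inv: "inv_set G \<psi> H" using H unfolding LF_def by auto
  obtain R where R: "R \<subseteq> H" "H \<subseteq> (\<Union>r\<in>R. orbit G \<psi> r)"
    and transversal: "\<And>r r'. r \<in> R \<Longrightarrow> r' \<in> R \<Longrightarrow> r' \<in> orbit G \<psi> r \<Longrightarrow> r' = r"
    using Y.orbit_transversal[OF HY H_inv] by blast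
  define P where "P = (\<lambda>r. (c r, r)) ` R"
  define s where "s = diagonal_saturation G \<phi> \<psi> P"
  have P: "P \<subseteq> X \<times> H" using R(1) HY assms(10) unfolding P_def by blast
  have P_V: "(f l, h) \<in> V" if "(l, h) \<in> P" for l h
    using that R(1) HY assms(11) unfolding P_def by blast
  have "snd ` P = R" unfolding P_def by force
  have "s \<subseteq> X \<times> H"
    unfolding s_def using diagonal_saturation_subset P X.inv_set_carrier H_inv by blast
  moreover have "snd ` s = H"
    using R Y.orbit_subset_inv_set[OF H_inv] \<open>snd ` P = R\<close>
    unfolding s_def snd_diagonal_saturation by blast
  moreover have "mv_equivariant G \<phi> \<psi> s"
    using mv_equivariant_diagonal_saturation assms(1,2) P HY unfolding s_def by blast
  moreover have "(\<lambda>(l, h). (f l, h)) ` s \<in> CY"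
  proof -
    have "fst ` P \<subseteq> X" using P by auto
    then have "(\<lambda>(l, h). (f l, h)) ` s \<subseteq> V"
      unfolding s_def using diagonal_saturation_controlled[OF assms(6,9) _ P_V] by blast
    then show ?thesis using assms(4,8) unfolding coarse_structure_def by blast
  qed
  moreover have "finite {l. (l, h) \<in> s}" for h
    unfolding s_def P_def
    by (rule finite_fibre_diagonal_saturation_transversal[OF assms(1,2)])
      (use R(1) HY assms(10,12) transversal in auto)
  ultimately have "fst ` s \<in> LF G X \<phi> BX \<and> shadow G \<phi> \<psi> CY f (fst ` s) H"
    by (rule LF_domain_shadow[OF assms(3-5,7) H])
  then show ?thesis by blast
qed

theorem lemma6p11:
  fixes G :: "('g, 'm) monoid_scheme"
    and X :: "'x set" and \<phi> :: "'g \<Rightarrow> 'x \<Rightarrow> 'x" and CX :: "('x \<times> 'x) set set" and BX :: "'x set set"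
    and Y :: "'y set" and \<psi> :: "'g \<Rightarrow> 'y \<Rightarrow> 'y" and CY :: "('y \<times> 'y) set set" and BY :: "'y set set"
    and f :: "'x \<Rightarrow> 'y"
  assumes "GBornCoarse G X \<phi> CX BX"
    and "GBornCoarse G Y \<psi> CY BY"
    and "GBC_morphism G X \<phi> CX BX Y \<psi> CY BY f"
    and "weak_coarse_equivalence X CX BX Y CY BY f"
    and "\<exists>U\<in>CY. \<forall>y\<in>Y. \<exists>x\<in>X. f x \<in> ent_image U {y} \<and> stab G \<phi> x \<subseteq> stab G \<psi> y \<and>
            finite {h <#\<^bsub>G\<^esub> stab G \<phi> x | h. h \<in> stab G \<psi> y}"
  shows "LF_almost_surjective G X \<phi> BX Y \<psi> CY BY f"
proof -
  have X: "group_action G X \<phi>" "bornology X BX" "compatible CX BX"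
    and Y: "group_action G Y \<psi>" "coarse_structure Y CY" "bornology Y BY" "compatible CY BY"
    and Y_inv: "\<forall>U\<in>CY. \<exists>V\<in>CY. U \<subseteq> V \<and> inv_rel G \<psi> V"
    and f: "f \<in> X \<rightarrow> Y" "equivariant G X \<phi> \<psi> f"
    using assms(1-3) unfolding GBornCoarse_def GBC_morphism_def by auto
  have f_bounded: "\<forall>A\<in>BX. f ` A \<in> BY"
    using bounded_image_if_weak_coarse_equivalence[OF X(2,3) Y(3) f(1) assms(4)] by blast
  obtain U where "U \<in> CY" and "\<forall>y\<in>Y. \<exists>x. x \<in> X \<and> f x \<in> ent_image U {y} \<and>
      finite {k <#\<^bsub>G\<^esub> stab G \<phi> x | k. k \<in> stab G \<psi> y}"
    using assms(5) by blast
  from bchoice[OF this(2)] obtain c where c: "\<forall>y\<in>Y. c y \<in> X \<and> f (c y) \<in> ent_image U {y} \<and>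
      finite {k <#\<^bsub>G\<^esub> stab G \<phi> (c y) | k. k \<in> stab G \<psi> y}"
    by blast
  obtain V where "V \<in> CY" "U \<subseteq> V" "inv_rel G \<psi> V" using Y_inv \<open>U \<in> CY\<close> by blast
  with c have "\<exists>L\<in>LF G X \<phi> BX. shadow G \<phi> \<psi> CY f L H" if "H \<in> LF G Y \<psi> BY" for H
    by (intro exists_LF_shadow[OF X(1) Y(1) X(2) Y(2,4) f(2) f_bounded _ _ _ _ _ that])
      (auto simp: ent_image_def)
  then show ?thesis unfolding LF_almost_surjective_def by blast
qed

end
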